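(* Let $\mathcal H$ be a separable complex Hilbert space, $A\in L(\mathcal H)^+$, and let $T\in L(\mathcal H)$ satisfy $AT^2=AT$. The following are equivalent: (1) $AT=T^*A$; (2) $R(I-T)\subseteq R(AT)^\perp$; (3) $T^*AT\le A$.
   Context: $L(\mathcal H)^+$ denotes positive (semidefinite) bounded operators on $\mathcal H$; $R(\cdot)$ denotes range; $\le$ is the usual order of selfadjoint operators. *)

theory Defs
  imports "HOL-Analysis.Analysis" "HOL-Library.Complex_Order"
begin

text \<open>Complex Hilbert spaces (not in the distribution library): a real Banach space
  with a compatible complex scalar multiplication and a complex inner product
  (antilinear in the first, linear in the second argument) inducing the norm.\<close>

class chilbert_space = banach +
  fixes scaleC :: "complex \<Rightarrow> 'a \<Rightarrow> 'a" (infixr \<open>*\<^sub>C\<close> 75)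
    and cinner :: "'a \<Rightarrow> 'a \<Rightarrow> complex"
  assumes scaleC_add_right: "c *\<^sub>C (x + y) = c *\<^sub>C x + c *\<^sub>C y"
    and scaleC_add_left: "(b + c) *\<^sub>C x = b *\<^sub>C x + c *\<^sub>C x"
    and scaleC_scaleC: "b *\<^sub>C (c *\<^sub>C x) = (b * c) *\<^sub>C x"
    and scaleC_one: "1 *\<^sub>C x = x"
    and scaleR_scaleC: "r *\<^sub>R x = complex_of_real r *\<^sub>C x"
    and cinner_commute: "cinner x y = cnj (cinner y x)"
    and cinner_add_left: "cinner (x + y) z = cinner x z + cinner y z"
    and cinner_scaleC_left: "cinner (c *\<^sub>C x) y = cnj c * cinner x y"
    and cinner_ge_zero: "0 \<le> cinner x x"
    and cinner_eq_zero_iff: "cinner x x = 0 \<longleftrightarrow> x = 0"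
    and norm_eq_sqrt_cinner: "norm x = sqrt (Re (cinner x x))"

definition bounded_clinear :: "('a::chilbert_space \<Rightarrow> 'b::chilbert_space) \<Rightarrow> bool" where
  "bounded_clinear f \<longleftrightarrow>
     (\<forall>x y. f (x + y) = f x + f y) \<and> (\<forall>c x. f (c *\<^sub>C x) = c *\<^sub>C f x) \<and>
     (\<exists>K. \<forall>x. norm (f x) \<le> norm x * K)"

definition cadjoint :: "('a::chilbert_space \<Rightarrow> 'a) \<Rightarrow> ('a \<Rightarrow> 'a)" where
  "cadjoint T = (THE S. \<forall>x y. cinner (S x) y = cinner x (T y))"

definition positive_op :: "('a::chilbert_space \<Rightarrow> 'a) \<Rightarrow> bool" where
  "positive_op A \<longleftrightarrow> bounded_clinear A \<and> (\<forall>x. 0 \<le> cinner x (A x))"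

definition op_le :: "('a::chilbert_space \<Rightarrow> 'a) \<Rightarrow> ('a \<Rightarrow> 'a) \<Rightarrow> bool" where
  "op_le S T \<longleftrightarrow> positive_op (\<lambda>x. T x - S x)"

definition orth :: "'a::chilbert_space set \<Rightarrow> 'a set" where
  "orth M = {y. \<forall>x\<in>M. cinner x y = 0}"

definition separable_space :: "'a::topological_space itself \<Rightarrow> bool" where
  "separable_space _ \<longleftrightarrow> (\<exists>D::'a set. countable D \<and> closure D = UNIV)"

end

theory Submission
  imports Defs
begin

text \<open>
  Since AT(I - T) = 0, condition (1) gives T*AT = ATT = AT, so
  \<open>\<langle>ATy, x - Tx\<rangle> = \<langle>ATy, x\<rangle> - \<langle>T*ATy, x\<rangle> = 0\<close>, which is (2); conversely (2) says
  AT = T*AT, which is selfadjoint, hence AT = (AT)* = T*A. Under (1), A - T*AT = A(I - T), whose form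
  \<open>\<langle>x, A(I - T)x\<rangle> = \<langle>(I - T)x, A(I - T)x\<rangle>\<close> is nonnegative by (2); this is (3). For (3) \<Rightarrow> (2),
  the form \<open>\<langle>z, Az\<rangle> - \<langle>Tz, ATz\<rangle>\<close> is nonnegative, and on \<open>z = Ty + s(x - Tx)\<close> it reduces to
  \<open>2 Re (s \<langle>Ty, A(x - Tx)\<rangle>) + |s|\<^sup>2 \<langle>x - Tx, A(x - Tx)\<rangle>\<close>; nonnegativity for all complex s forces
  the cross term to vanish.

  The adjoint is defined by a definite description, so its defining property has to be
  established first: by the Riesz representation theorem, proved from the projection theorem.
\<close>

lemma scaleC_zero_left [simp]: "0 *\<^sub>C x = 0"
  using scaleR_scaleC[of 0 x] by simp

lemma scaleC_minus_one: "(-1) *\<^sub>C x = - x"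
  using scaleR_scaleC[of "-1" x] by simp

lemma scaleC_diff_right: "c *\<^sub>C (x - y) = c *\<^sub>C x - c *\<^sub>C y"
  using scaleC_add_right[of c "x - y" y] by (simp add: eq_diff_eq)

lemma scaleC_zero_right [simp]: "c *\<^sub>C 0 = 0"
  using scaleC_diff_right[of c 0 0] by simp

lemma cinner_add_right: "cinner x (y + z) = cinner x y + cinner x z"
  by (metis cinner_commute cinner_add_left complex_cnj_add)

lemma cinner_scaleC_right: "cinner x (c *\<^sub>C y) = c * cinner x y"
  by (metis cinner_commute cinner_scaleC_left complex_cnj_cnj complex_cnj_mult)

lemma cinner_diff_left: "cinner (x - y) z = cinner x z - cinner y z"
  using cinner_add_left[of "x - y" y z] by (simp add: eq_diff_eq)

lemma cinner_diff_right: "cinner x (y - z) = cinner x y - cinner x z"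
  using cinner_add_right[of x "y - z" z] by (simp add: eq_diff_eq)

lemma cinner_zero_left [simp]: "cinner 0 y = 0"
  using cinner_diff_left[of 0 0 y] by simp

lemma cinner_self_eq_norm_sq: "cinner x x = complex_of_real ((norm x)\<^sup>2)"
  using cinner_ge_zero[of x] by (simp add: norm_eq_sqrt_cinner less_eq_complex_def complex_eq_iff)

lemma cinner_eq_left: "(\<And>y. cinner a y = cinner b y) \<Longrightarrow> a = b"
  by (metis cinner_diff_left cinner_eq_zero_iff eq_iff_diff_eq_0)

lemma cinner_eq_right: "(\<And>y. cinner y a = cinner y b) \<Longrightarrow> a = b"
  by (metis cinner_diff_right cinner_eq_zero_iff eq_iff_diff_eq_0)

lemma bounded_clinear_iff:
  "bounded_clinear f \<longleftrightarrow> bounded_linear f \<and> (\<forall>c x. f (c *\<^sub>C x) = c *\<^sub>C f x)"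
proof
  assume f: "bounded_clinear f"
  then obtain K where "\<And>x. norm (f x) \<le> norm x * K"
    by (auto simp: bounded_clinear_def)
  moreover have "f (r *\<^sub>R x) = r *\<^sub>R f x" for r x
    using f by (simp add: bounded_clinear_def scaleR_scaleC)
  ultimately show "bounded_linear f \<and> (\<forall>c x. f (c *\<^sub>C x) = c *\<^sub>C f x)"
    using f by (auto simp: bounded_clinear_def intro: bounded_linear_intro)
next
  assume "bounded_linear f \<and> (\<forall>c x. f (c *\<^sub>C x) = c *\<^sub>C f x)"
  then show "bounded_clinear f"
    unfolding bounded_clinear_def
    by (metis bounded_linear.bounded bounded_linear.linear linear_add)
qed

lemma bounded_clinear_id: "bounded_clinear (\<lambda>x. x)"
  by (simp add: bounded_clinear_iff)

lemma bounded_clinear_compose: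
  "bounded_clinear f \<Longrightarrow> bounded_clinear g \<Longrightarrow> bounded_clinear (\<lambda>x. f (g x))"
  by (simp add: bounded_clinear_iff bounded_linear_compose)

lemma bounded_clinear_diff:
  "bounded_clinear f \<Longrightarrow> bounded_clinear g \<Longrightarrow> bounded_clinear (\<lambda>x. f x - g x)"
  by (simp add: bounded_clinear_iff bounded_linear_sub scaleC_diff_right)

lemma bounded_clinear_add: "bounded_clinear f \<Longrightarrow> f (x + y) = f x + f y"
  by (simp add: bounded_clinear_def)

lemma bounded_clinear_scaleC: "bounded_clinear f \<Longrightarrow> f (c *\<^sub>C x) = c *\<^sub>C f x"
  by (simp add: bounded_clinear_def)

lemma bounded_clinear_minus: "bounded_clinear f \<Longrightarrow> f (x - y) = f x - f y"
  by (simp add: bounded_clinear_iff linear_diff bounded_linear.linear)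

lemma Re_cinner_add_scaleC_selfadjoint:
  assumes B: "bounded_clinear B" and sa: "\<And>x y. cinner (B x) y = cinner x (B y)"
  shows "Re (cinner (v + s *\<^sub>C u) (B (v + s *\<^sub>C u)))
       = Re (cinner v (B v)) + 2 * Re (s * cinner v (B u)) + (cmod s)\<^sup>2 * Re (cinner u (B u))"
proof -
  have cross: "cinner u (B v) = cnj (cinner v (B u))"
    using sa[of u v] cinner_commute[of "B u" v] by simp
  have "cinner (v + s *\<^sub>C u) (B (v + s *\<^sub>C u))
      = cinner v (B v) + s * cinner v (B u) + cnj (s * cinner v (B u)) + (cnj s * s) * cinner u (B u)"
    using B by (simp add: bounded_clinear_add bounded_clinear_scaleC cinner_add_left cinner_add_right
        cinner_scaleC_left cinner_scaleC_right cross algebra_simps)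
  then show ?thesis
    by (simp add: complex_norm_square[symmetric, of s, unfolded mult.commute[of s]])
qed

lemma norm_add_scaleC_sq:
  "(norm (v + s *\<^sub>C u))\<^sup>2 = (norm v)\<^sup>2 + 2 * Re (s * cinner v u) + (cmod s)\<^sup>2 * (norm u)\<^sup>2"
  using Re_cinner_add_scaleC_selfadjoint[OF bounded_clinear_id, of v s u]
  by (simp add: cinner_self_eq_norm_sq)

lemma parallelogram_law:
  fixes x y :: "'a::chilbert_space"
  shows "(norm (x + y))\<^sup>2 + (norm (x - y))\<^sup>2 = 2 * (norm x)\<^sup>2 + 2 * (norm y)\<^sup>2"
  using norm_add_scaleC_sq[of x 1 y] norm_add_scaleC_sq[of x "-1" y]
  by (simp add: scaleC_one scaleC_minus_one)

lemma Re_cinner_polarization: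
  fixes x y :: "'a::chilbert_space"
  shows "Re (cinner x y) = ((norm (x + y))\<^sup>2 - (norm (x - y))\<^sup>2) / 4"
  using norm_add_scaleC_sq[of x 1 y] norm_add_scaleC_sq[of x "-1" y]
  by (simp add: scaleC_one scaleC_minus_one)

lemma cross_term_eq_0:
  assumes "\<And>s. 0 \<le> 2 * Re (s * c) + (cmod s)\<^sup>2 * b"
  shows "c = 0"
proof (rule ccontr)
  assume "c \<noteq> 0"
  then have c: "(cmod c)\<^sup>2 > 0" by simp
  define t where "t = 1 / (\<bar>b\<bar> + 1)"
  have t: "t > 0" "t * b < 2"
    using abs_ge_self[of b] by (auto simp: t_def field_simps)
  define s where "s = - (complex_of_real t * cnj c)"
  have "0 \<le> 2 * Re (s * c) + (cmod s)\<^sup>2 * b"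
    by (rule assms)
  also have "s * c = - complex_of_real (t * (cmod c)\<^sup>2)"
    by (simp add: s_def complex_norm_square[symmetric, of c, unfolded mult.commute[of c]])
  also have "cmod s = t * cmod c"
    using t by (simp add: s_def norm_mult)
  also have "2 * Re (- complex_of_real (t * (cmod c)\<^sup>2)) + (t * cmod c)\<^sup>2 * b
      = t * (cmod c)\<^sup>2 * (t * b - 2)"
    by (simp add: power2_eq_square algebra_simps)
  also have "\<dots> < 0"
    using t c by (simp add: mult_pos_neg)
  finally show False by simp
qed

lemma continuous_on_cinner_right:
  assumes g: "continuous_on UNIV g"
  shows "continuous_on UNIV (\<lambda>y. cinner x (g y))"
proof -
  have Re: "continuous_on UNIV (\<lambda>y. Re (cinner u (g y)))" for u
    unfolding Re_cinner_polarization by (intro continuous_intros g) auto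
  have "Im (cinner x z) = Re (cinner (\<i> *\<^sub>C x) z)" for z
    by (simp add: cinner_scaleC_left)
  then have "(\<lambda>y. cinner x (g y)) = (\<lambda>y. Complex (Re (cinner x (g y))) (Re (cinner (\<i> *\<^sub>C x) (g y))))"
    by (simp add: complex_eq_iff fun_eq_iff)
  then show ?thesis by (simp only:) (intro continuous_intros Re)
qed

lemma closest_point_exists:
  fixes M :: "'a::chilbert_space set"
  assumes "closed M" "convex M" "M \<noteq> {}"
  shows "\<exists>m\<in>M. \<forall>k\<in>M. norm (w - m) \<le> norm (w - k)"
proof -
  define d where "d = infdist w M"
  have d_le: "d \<le> norm (w - k)" if "k \<in> M" for k
    using infdist_le[OF that, of w] by (simp add: d_def dist_norm)
  have "\<exists>k\<in>M. norm (w - k) < d + 1 / Suc n" for n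
  proof -
    have "(INF k\<in>M. dist w k) < d + 1 / Suc n"
      using assms(3) by (simp add: d_def infdist_notempty)
    then show ?thesis
      by (simp only: cINF_less_iff[OF assms(3) bdd_below_image_dist]) (auto simp: dist_norm)
  qed
  then obtain k where kM: "\<And>n. k n \<in> M" and k_lt: "\<And>n. norm (w - k n) < d + 1 / Suc n"
    by metis
  have dist_lim: "(\<lambda>n. norm (w - k n)) \<longlonglongrightarrow> d"
  proof (rule tendsto_sandwich[where f = "\<lambda>_. d" and h = "\<lambda>n. d + 1 / Suc n"])
    show "(\<lambda>n. d + 1 / Suc n) \<longlonglongrightarrow> d"
      using tendsto_add[OF tendsto_const LIMSEQ_Suc[OF lim_const_over_n[of 1]]] by simp
  qed (use d_le kM k_lt in \<open>auto intro!: always_eventually less_imp_le\<close>)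
  define excess where "excess n = (norm (w - k n))\<^sup>2 - d\<^sup>2" for n
  have "excess \<longlonglongrightarrow> 0"
    unfolding excess_def
    using tendsto_diff[OF tendsto_power[OF dist_lim, of 2] tendsto_const[of "d\<^sup>2"]] by simp
  have spread: "(norm (k m - k n))\<^sup>2 \<le> 2 * excess m + 2 * excess n" for m n
  proof -
    have "(1/2) *\<^sub>R k m + (1/2) *\<^sub>R k n \<in> M"
      using assms(2) kM by (simp add: convex_def)
    then have "d \<le> norm (w - ((1/2) *\<^sub>R k m + (1/2) *\<^sub>R k n))"
      by (rule d_le)
    also have "\<dots> = norm ((w - k m) + (w - k n)) / 2"
    proof -
      have "(w - k m) + (w - k n) = 2 *\<^sub>R (w - ((1/2) *\<^sub>R k m + (1/2) *\<^sub>R k n))"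
        by (simp add: algebra_simps scaleR_2)
      then show ?thesis by simp
    qed
    finally have "(2 * d)\<^sup>2 \<le> (norm ((w - k m) + (w - k n)))\<^sup>2"
      using infdist_nonneg[of w M] by (intro power_mono) (auto simp: d_def)
    moreover have "(w - k m) - (w - k n) = k n - k m" by simp
    ultimately show ?thesis
      using parallelogram_law[of "w - k m" "w - k n"] by (simp add: excess_def norm_minus_commute)
  qed
  have "Cauchy k"
  proof (rule metric_CauchyI)
    fix e :: real assume "e > 0"
    then have "e\<^sup>2 / 4 > 0" by simp
    from LIMSEQ_D[OF \<open>excess \<longlonglongrightarrow> 0\<close> this]
    obtain N where N: "\<And>n. n \<ge> N \<Longrightarrow> \<bar>excess n\<bar> < e\<^sup>2 / 4"
      by auto
    have "dist (k m) (k n) < e" if "m \<ge> N" "n \<ge> N" for m n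
    proof -
      have "(norm (k m - k n))\<^sup>2 < e\<^sup>2"
        using spread[of m n] N[OF \<open>m \<ge> N\<close>] N[OF \<open>n \<ge> N\<close>] by linarith
      then show ?thesis
        using \<open>e > 0\<close> by (simp add: dist_norm power_less_imp_less_base)
    qed
    then show "\<exists>N. \<forall>m\<ge>N. \<forall>n\<ge>N. dist (k m) (k n) < e" by blast
  qed
  then obtain m where lim: "k \<longlonglongrightarrow> m"
    using Cauchy_convergent_iff convergent_def by blast
  have "m \<in> M"
    using closed_sequentially[OF assms(1)] kM lim by blast
  moreover have "norm (w - m) = d"
    using LIMSEQ_unique[OF tendsto_norm[OF tendsto_diff[OF tendsto_const lim]] dist_lim] .
  ultimately show ?thesis using d_le by auto
qed

lemma closest_point_orthogonal:
  assumes add: "\<And>x y. x \<in> M \<Longrightarrow> y \<in> M \<Longrightarrow> x + y \<in> M"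
    and scale: "\<And>c x. x \<in> M \<Longrightarrow> c *\<^sub>C x \<in> M"
    and "m \<in> M" and closest: "\<And>k. k \<in> M \<Longrightarrow> norm (w - m) \<le> norm (w - k)"
    and "k \<in> M"
  shows "cinner k (w - m) = 0"
proof -
  have "cinner (w - m) k = 0"
  proof (rule cross_term_eq_0)
    fix s
    have "m + (- s) *\<^sub>C k \<in> M" using add scale \<open>m \<in> M\<close> \<open>k \<in> M\<close> by blast
    then have "(norm (w - m))\<^sup>2 \<le> (norm (w - (m + (- s) *\<^sub>C k)))\<^sup>2"
      by (intro power_mono closest) auto
    also have "w - (m + (- s) *\<^sub>C k) = (w - m) + s *\<^sub>C k"
      using scaleC_add_left[of s "- s" k] by (simp add: algebra_simps eq_neg_iff_add_eq_0)
    finally show "0 \<le> 2 * Re (s * cinner (w - m) k) + (cmod s)\<^sup>2 * (norm k)\<^sup>2"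
      by (simp add: norm_add_scaleC_sq)
  qed
  then show ?thesis by (metis cinner_commute complex_cnj_zero)
qed

lemma riesz_representation:
  fixes f :: "'a::chilbert_space \<Rightarrow> complex"
  assumes add: "\<And>x y. f (x + y) = f x + f y"
    and scale: "\<And>c x. f (c *\<^sub>C x) = c * f x"
    and cont: "continuous_on UNIV f"
  shows "\<exists>z. \<forall>y. f y = cinner z y"
proof (cases "\<forall>y. f y = 0")
  case True
  then show ?thesis by (intro exI[of _ 0]) simp
next
  case False
  then obtain w where "f w \<noteq> 0" by blast
  have f_diff: "f (x - y) = f x - f y" for x y
    using add[of "x - y" y] by simp
  define M where "M = {y. f y = 0}"
  have M_add: "x + y \<in> M" if "x \<in> M" "y \<in> M" for x y
    using that by (simp add: M_def add)
  have M_scale: "c *\<^sub>C x \<in> M" if "x \<in> M" for c x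
    using that by (simp add: M_def scale)
  have "closed M"
    unfolding M_def by (rule closed_Collect_eq[OF cont continuous_on_const])
  moreover have "convex M"
    by (auto simp: convex_def M_def add scaleR_scaleC scale)
  moreover have "0 \<in> M"
    using f_diff[of 0 0] by (simp add: M_def)
  ultimately obtain m where "m \<in> M" and closest: "\<And>k. k \<in> M \<Longrightarrow> norm (w - m) \<le> norm (w - k)"
    using closest_point_exists[of M w] by blast
  define p where "p = w - m"
  have p_orth: "cinner k p = 0" if "f k = 0" for k
    unfolding p_def using that
    by (intro closest_point_orthogonal[OF M_add M_scale \<open>m \<in> M\<close> closest]) (simp_all add: M_def)
  have "f p \<noteq> 0"
    using \<open>f w \<noteq> 0\<close> \<open>m \<in> M\<close> by (simp add: p_def f_diff M_def)
  then have "p \<noteq> 0"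
    using f_diff[of 0 0] by auto
  then have pp: "cinner p p \<noteq> 0"
    by (simp add: cinner_eq_zero_iff)
  have pp_real: "cnj (cinner p p) = cinner p p"
    using cinner_commute[of p p] by simp
  show ?thesis
  proof (intro exI allI)
    fix y
    \<comment> \<open>\<open>f y *\<^sub>C p - f p *\<^sub>C y\<close> lies in the kernel of f, hence is orthogonal to p\<close>
    have "cinner (f y *\<^sub>C p - f p *\<^sub>C y) p = 0"
      by (rule p_orth) (simp add: f_diff scale)
    then have "f y * cinner p p = f p * cinner p y"
      using cinner_commute[of y p] pp_real
      by (simp add: cinner_diff_left cinner_scaleC_left)
        (metis complex_cnj_cnj complex_cnj_mult)
    then show "f y = cinner ((cnj (f p) / cinner p p) *\<^sub>C p) y"
      using pp pp_real by (simp add: cinner_scaleC_left field_simps)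
  qed
qed

lemma cinner_cadjoint:
  assumes T: "bounded_clinear T"
  shows "cinner (cadjoint T x) y = cinner x (T y)"
proof -
  have "\<exists>z. \<forall>y. cinner x (T y) = cinner z y" for x
    using T
    by (intro riesz_representation continuous_on_cinner_right linear_continuous_on)
      (simp_all add: bounded_clinear_iff bounded_clinear_add bounded_clinear_scaleC
        cinner_add_right cinner_scaleC_right)
  then obtain S where S: "\<And>x y. cinner x (T y) = cinner (S x) y"
    by metis
  have "cadjoint T = S"
    unfolding cadjoint_def
  proof (rule the_equality)
    show "\<forall>x y. cinner (S x) y = cinner x (T y)" using S by simp
    show "S' = S" if "\<forall>x y. cinner (S' x) y = cinner x (T y)" for S'
      using S that by (intro ext cinner_eq_left) simp
  qed
  then show ?thesis using S by simp
qed

lemma cinner_cadjoint_right: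
  "bounded_clinear T \<Longrightarrow> cinner x (cadjoint T y) = cinner (T x) y"
  by (metis cinner_cadjoint cinner_commute)

lemma positive_op_selfadjoint:
  assumes A: "positive_op A"
  shows "cinner (A x) y = cinner x (A y)"
proof -
  have lin: "bounded_clinear A" and "\<And>z. 0 \<le> cinner z (A z)"
    using A by (auto simp: positive_op_def)
  then have im: "Im (cinner z (A z)) = 0" for z
    by (simp add: less_eq_complex_def)
  have "Im (cinner x (A y)) + Im (cinner y (A x)) = 0"
    using im[of "x + y"] im[of x] im[of y] lin
    by (simp add: bounded_clinear_add cinner_add_left cinner_add_right)
  moreover have "Re (cinner x (A y)) - Re (cinner y (A x)) = 0"
    using im[of "x + \<i> *\<^sub>C y"] im[of x] im[of y] lin
    by (simp add: bounded_clinear_add bounded_clinear_scaleC cinner_add_left cinner_add_right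
        cinner_scaleC_left cinner_scaleC_right)
  ultimately show ?thesis
    by (simp add: cinner_commute[of "A x"] complex_eq_iff)
qed

lemma A_selfadjoint_iff_range_orth:
  assumes A: "positive_op A" and T: "bounded_clinear T"
    and idem: "\<And>x. A (T (T x)) = A (T x)"
  shows "(\<forall>x. A (T x) = cadjoint T (A x)) \<longleftrightarrow> (\<forall>x y. cinner (A (T y)) (x - T x) = 0)"
proof
  assume sa: "\<forall>x. A (T x) = cadjoint T (A x)"
  show "\<forall>x y. cinner (A (T y)) (x - T x) = 0"
  proof (intro allI)
    fix x y
    have "cinner (A (T y)) (T x) = cinner (cadjoint T (A (T y))) x"
      using T by (simp add: cinner_cadjoint)
    also have "\<dots> = cinner (A (T y)) x"
      by (metis sa idem)
    finally show "cinner (A (T y)) (x - T x) = 0"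
      by (simp add: cinner_diff_right)
  qed
next
  assume orth: "\<forall>x y. cinner (A (T y)) (x - T x) = 0"
  then have fix_T: "cinner (A (T y)) (T x) = cinner (A (T y)) x" for x y
    by (simp add: cinner_diff_right)
  have A_sa: "cinner (A a) b = cinner a (A b)" for a b
    using A by (rule positive_op_selfadjoint)
  show "\<forall>x. A (T x) = cadjoint T (A x)"
  proof (intro allI cinner_eq_right)
    fix x y
    have "cinner y (A (T x)) = cinner (A (T y)) (T x)"
      by (metis A_sa cinner_commute fix_T)
    also have "\<dots> = cinner (T y) (A x)"
      by (metis A_sa fix_T)
    also have "\<dots> = cinner y (cadjoint T (A x))"
      using T by (simp add: cinner_cadjoint_right)
    finally show "cinner y (A (T x)) = cinner y (cadjoint T (A x))" .
  qed
qed

lemma A_selfadjoint_imp_A_contraction: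
  assumes A: "positive_op A" and T: "bounded_clinear T"
    and idem: "\<And>x. A (T (T x)) = A (T x)"
    and sa: "\<forall>x. A (T x) = cadjoint T (A x)"
  shows "positive_op (\<lambda>x. A x - cadjoint T (A (T x)))"
proof -
  have A_lin: "bounded_clinear A" and A_pos: "\<And>z. 0 \<le> cinner z (A z)"
    using A by (auto simp: positive_op_def)
  have orth: "cinner (A (T y)) (x - T x) = 0" for x y
    using sa A_selfadjoint_iff_range_orth[OF A T idem] by blast
  have "(\<lambda>x. A x - cadjoint T (A (T x))) = (\<lambda>x. A x - A (T x))"
    by (metis sa idem)
  moreover have "0 \<le> cinner x (A x - A (T x))" for x
  proof -
    have "cinner x (A x - A (T x)) = cinner (x - T x) (A (x - T x)) + cinner (T x) (A (x - T x))"
      using A_lin by (simp add: bounded_clinear_minus cinner_diff_left)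
    also have "cinner (T x) (A (x - T x)) = 0"
      using orth[of x x] positive_op_selfadjoint[OF A] by metis
    finally show ?thesis using A_pos by simp
  qed
  ultimately show ?thesis
    using A_lin T by (simp add: positive_op_def bounded_clinear_diff bounded_clinear_compose)
qed

lemma A_contraction_imp_range_orth:
  assumes A: "positive_op A" and T: "bounded_clinear T"
    and idem: "\<And>x. A (T (T x)) = A (T x)"
    and contr: "positive_op (\<lambda>x. A x - cadjoint T (A (T x)))"
  shows "cinner (A (T y)) (x - T x) = 0"
proof -
  have A_lin: "bounded_clinear A"
    using A by (simp add: positive_op_def)
  have A_sa: "cinner (A a) b = cinner a (A b)" for a b
    using A by (rule positive_op_selfadjoint)
  have form_le: "Re (cinner (T z) (A (T z))) \<le> Re (cinner z (A z))" for z
  proof -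
    have "0 \<le> cinner z (A z - cadjoint T (A (T z)))"
      using contr by (simp add: positive_op_def)
    then show ?thesis
      using T by (simp add: cinner_diff_right cinner_cadjoint_right less_eq_complex_def)
  qed
  define u where "u = x - T x"
  define v where "v = T y"
  have ATu: "A (T u) = 0"
    using A_lin T idem by (simp add: u_def bounded_clinear_minus)
  have "cinner v (A u) = 0"
  proof (rule cross_term_eq_0)
    fix s
    have "A (T (v + s *\<^sub>C u)) = A v"
      using A_lin T ATu idem by (simp add: v_def bounded_clinear_add bounded_clinear_scaleC)
    then have "cinner (T (v + s *\<^sub>C u)) (A (T (v + s *\<^sub>C u))) = cinner v (A v)"
      by (metis A_sa cinner_commute)
    then show "0 \<le> 2 * Re (s * cinner v (A u)) + (cmod s)\<^sup>2 * Re (cinner u (A u))"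
      using form_le[of "v + s *\<^sub>C u"] Re_cinner_add_scaleC_selfadjoint[OF A_lin A_sa, of v s u]
      by simp
  qed
  then show ?thesis
    by (simp add: A_sa u_def v_def)
qed

theorem mainTheorem4:
  fixes A T :: "'a::chilbert_space \<Rightarrow> 'a"
  assumes "separable_space TYPE('a)"
    and "positive_op A"
    and "bounded_clinear T"
    and "A \<circ> T \<circ> T = A \<circ> T"
  shows "((A \<circ> T = cadjoint T \<circ> A) \<longleftrightarrow> range (\<lambda>x. x - T x) \<subseteq> orth (range (A \<circ> T)))
       \<and> ((A \<circ> T = cadjoint T \<circ> A) \<longleftrightarrow> op_le (cadjoint T \<circ> A \<circ> T) A)"
proof -
  have idem: "\<And>x. A (T (T x)) = A (T x)"
    using assms(4) by (metis comp_apply)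
  have sa: "A \<circ> T = cadjoint T \<circ> A \<longleftrightarrow> (\<forall>x. A (T x) = cadjoint T (A x))"
    by (simp add: fun_eq_iff)
  have orth: "range (\<lambda>x. x - T x) \<subseteq> orth (range (A \<circ> T))
      \<longleftrightarrow> (\<forall>x y. cinner (A (T y)) (x - T x) = 0)"
    by (auto simp: orth_def)
  have contr: "op_le (cadjoint T \<circ> A \<circ> T) A \<longleftrightarrow> positive_op (\<lambda>x. A x - cadjoint T (A (T x)))"
    by (simp add: op_le_def)
  show ?thesis
    unfolding sa orth contr
    using A_selfadjoint_iff_range_orth A_selfadjoint_imp_A_contraction A_contraction_imp_range_orth
      assms(2,3) idem
    by blast
qed

end
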